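(* Let $G$ be a finite group acting linearly, isometrically and effectively on $\mathbb{R}^n$, let $X$ be a random variable with $\mathbb{E}(\|X\|^2)<+\infty$ and $t_0=\mathbb{E}(X)$ a regular point. If the support of the law of $X$ is a compact set contained in the interior of $\mathrm{Cone}(t_0)$, then $t_0$ is a local minimiser of $F$ (i.e. $[t_0]$ is a Karcher mean of $[X]$).
   Context: A group action is linear and isometric if each $x\mapsto g\cdot x$ is linear with $\|g\cdot x\|=\|x\|$, and effective if $x\mapsto g\cdot x$ is the identity only for $g=e_G$. A point $m$ is regular if $\{g: g\cdot m=m\}=\{e_G\}$. For regular $m$, $\mathrm{Cone}(m)=\{x: \|x-m\|\le\|x-g\cdot m\| \ \forall g\in G\}$. The support of $X$ is the set of $x$ with $\mathbb{P}(X\in B(x,r))>0$ for all $r>0$. $F(m)=\mathbb{E}\big(\min_{g\in G}\|g\cdot X-m\|^2\big)$. *)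

theory Defs
  imports "HOL-Analysis.Analysis" "HOL-Probability.Probability" "HOL-Algebra.Group_Action"
begin

definition lin_iso_eff_action :: "('g, 'b) monoid_scheme \<Rightarrow> ('g \<Rightarrow> real^'n \<Rightarrow> real^'n) \<Rightarrow> bool" where
  "lin_iso_eff_action G act \<longleftrightarrow>
     group_action G (UNIV :: (real^'n) set) act \<and>
     (\<forall>g\<in>carrier G. linear (act g)) \<and>
     (\<forall>g\<in>carrier G. \<forall>x. norm (act g x) = norm x) \<and>
     (\<forall>g\<in>carrier G. (\<forall>x. act g x = x) \<longrightarrow> g = \<one>\<^bsub>G\<^esub>)"

definition regular_point :: "('g, 'b) monoid_scheme \<Rightarrow> ('g \<Rightarrow> real^'n \<Rightarrow> real^'n) \<Rightarrow> real^'n \<Rightarrow> bool" where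
  "regular_point G act m \<longleftrightarrow> {g \<in> carrier G. act g m = m} = {\<one>\<^bsub>G\<^esub>}"

definition Cone :: "('g, 'b) monoid_scheme \<Rightarrow> ('g \<Rightarrow> real^'n \<Rightarrow> real^'n) \<Rightarrow> real^'n \<Rightarrow> (real^'n) set" where
  "Cone G act m = {x. \<forall>g\<in>carrier G. norm (x - m) \<le> norm (x - act g m)}"

definition support_of :: "'a measure \<Rightarrow> ('a \<Rightarrow> real^'n) \<Rightarrow> (real^'n) set" where
  "support_of M X = {x. \<forall>r>0. measure M (X -` ball x r \<inter> space M) > 0}"

definition Fmean :: "('g, 'b) monoid_scheme \<Rightarrow> ('g \<Rightarrow> real^'n \<Rightarrow> real^'n) \<Rightarrow> 'a measure \<Rightarrow> ('a \<Rightarrow> real^'n) \<Rightarrow> real^'n \<Rightarrow> real" where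
  "Fmean G act M X m = (\<integral>\<omega>. (MIN g\<in>carrier G. (norm (act g (X \<omega>) - m))\<^sup>2) \<partial>M)"

end

theory Submission
  imports Defs
begin

text \<open>On the support of \<open>X\<close> the minimum over the orbit in \<open>F(m)\<close> is attained at the identity
  as long as the support lies in \<open>Cone(m)\<close>, and then \<open>F(m) = E \<parallel>X - m\<parallel>\<^sup>2 = F(t\<^sub>0) + \<parallel>t\<^sub>0 - m\<parallel>\<^sup>2\<close>.
  A compact subset of the interior of \<open>Cone(t\<^sub>0)\<close> stays in \<open>Cone(m)\<close> for \<open>m\<close> near \<open>t\<^sub>0\<close>:
  for \<open>g \<noteq> 1\<close> the cone lies in the half-space \<open>x \<bullet> (g t\<^sub>0 - t\<^sub>0) \<le> 0\<close>, with \<open>g t\<^sub>0 \<noteq> t\<^sub>0\<close> by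
  regularity, so its interior lies in the open half-space, and a compact set keeps a uniformly
  negative inner product under small perturbations of the normal vector.\<close>

lemma (in finite_measure) AE_in_support_of:
  fixes X :: "'a \<Rightarrow> real^'n"
  assumes X: "X \<in> borel_measurable M"
  shows "AE \<omega> in M. X \<omega> \<in> support_of M X"
proof -
  define N where "N = {ball x r | x r. r > 0 \<and> measure M (X -` ball x r \<inter> space M) = 0}"
  have "\<And>B. B \<in> N \<Longrightarrow> open B" unfolding N_def by auto
  then obtain N' where N': "N' \<subseteq> N" "countable N'" "\<Union>N' = \<Union>N"
    using Lindelof by metis
  have "AE \<omega> in M. \<forall>B\<in>N'. X \<omega> \<notin> B"
  proof (subst AE_ball_countable[OF N'(2)], intro ballI)
    fix B assume "B \<in> N'"
    then obtain x r where B: "B = ball x r" and null: "measure M (X -` ball x r \<inter> space M) = 0"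
      using N'(1) unfolding N_def by auto
    have "X -` ball x r \<inter> space M \<in> sets M" using X by measurable
    with B null show "AE \<omega> in M. X \<omega> \<notin> B"
      by (intro AE_I[where N="X -` ball x r \<inter> space M"]) (auto simp: emeasure_eq_measure)
  qed
  moreover have "X \<omega> \<in> support_of M X" if "\<forall>B\<in>N'. X \<omega> \<notin> B" for \<omega>
  proof (rule ccontr)
    assume "X \<omega> \<notin> support_of M X"
    then obtain r where "r > 0" "\<not> measure M (X -` ball (X \<omega>) r \<inter> space M) > 0"
      unfolding support_of_def by auto
    then have "ball (X \<omega>) r \<in> N"
      unfolding N_def using measure_nonneg[of M "X -` ball (X \<omega>) r \<inter> space M"] by force
    then have "X \<omega> \<in> \<Union>N'" using N'(3) \<open>r > 0\<close> by (metis UnionI centre_in_ball)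
    with that show False by auto
  qed
  ultimately show ?thesis by (auto elim: AE_mp)
qed

lemma (in prob_space) integral_norm_diff_sq_eq:
  fixes X :: "'a \<Rightarrow> 'v::euclidean_space"
  assumes X: "X \<in> borel_measurable M" and sq: "integrable M (\<lambda>\<omega>. (norm (X \<omega>))\<^sup>2)"
  shows "(\<integral>\<omega>. (norm (X \<omega> - m))\<^sup>2 \<partial>M) = (\<integral>\<omega>. (norm (X \<omega> - expectation X))\<^sup>2 \<partial>M) + (norm (expectation X - m))\<^sup>2"
proof -
  have "(\<lambda>\<omega>. norm (X \<omega>)) \<in> borel_measurable M" using X by measurable
  then have "integrable M (\<lambda>\<omega>. norm (X \<omega>))" using sq by (rule square_integrable_imp_integrable)
  then have int_X: "integrable M X" using X integrable_norm_iff by blast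
  have expand: "(norm (x - m))\<^sup>2 = (norm x)\<^sup>2 - 2 * (x \<bullet> m) + (norm m)\<^sup>2" for x m :: 'v
    by (simp add: power2_norm_eq_inner inner_diff_left inner_diff_right inner_commute)
  have integral_expand: "(\<integral>\<omega>. (norm (X \<omega> - m))\<^sup>2 \<partial>M)
      = (\<integral>\<omega>. (norm (X \<omega>))\<^sup>2 \<partial>M) - 2 * (expectation X \<bullet> m) + (norm m)\<^sup>2" for m
  proof -
    have "(\<integral>\<omega>. (norm (X \<omega> - m))\<^sup>2 \<partial>M) = (\<integral>\<omega>. (norm (X \<omega>))\<^sup>2 - 2 * (X \<omega> \<bullet> m) + (norm m)\<^sup>2 \<partial>M)"
      by (simp only: expand)
    also have "\<dots> = (\<integral>\<omega>. (norm (X \<omega>))\<^sup>2 \<partial>M) - 2 * (\<integral>\<omega>. X \<omega> \<bullet> m \<partial>M) + (norm m)\<^sup>2"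
      using sq int_X by (simp add: Bochner_Integration.integral_add Bochner_Integration.integral_diff prob_space)
    finally show ?thesis using int_X by simp
  qed
  show ?thesis
    unfolding integral_expand expand[of "expectation X" m] by (simp add: power2_norm_eq_inner)
qed

lemma open_halfspaces_lt_of_compact:
  fixes K :: "'a::real_inner set"
  assumes "compact K"
  shows "open {w. \<forall>x\<in>K. x \<bullet> w < 0}"
proof (cases "K = {}")
  case False
  obtain B where B: "B > 0" "\<And>x. x \<in> K \<Longrightarrow> norm x \<le> B"
    using compact_imp_bounded[OF assms] bounded_pos by metis
  show ?thesis
  proof (rule openI)
    fix v assume v: "v \<in> {w. \<forall>x\<in>K. x \<bullet> w < 0}"
    have "continuous_on K (\<lambda>x. x \<bullet> v)" by (intro continuous_intros)
    then obtain x0 where "x0 \<in> K" and max: "\<And>x. x \<in> K \<Longrightarrow> x \<bullet> v \<le> x0 \<bullet> v"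
      using continuous_attains_sup[OF assms False] by blast
    define \<delta> where "\<delta> = - (x0 \<bullet> v)"
    have "\<delta> > 0" using v \<open>x0 \<in> K\<close> unfolding \<delta>_def by auto
    have "x \<bullet> w < 0" if "x \<in> K" "dist w v < \<delta> / B" for x w
    proof -
      have "x \<bullet> (w - v) \<le> B * norm (w - v)"
        using norm_cauchy_schwarz[of x "w - v"] B(2)[OF \<open>x \<in> K\<close>] mult_right_mono norm_ge_zero
        by (meson order_trans)
      also have "\<dots> < \<delta>" using that(2) B(1) by (simp add: dist_norm field_simps)
      finally show ?thesis using max[OF \<open>x \<in> K\<close>] unfolding \<delta>_def by (simp add: inner_diff_right)
    qed
    then show "\<exists>e>0. ball v e \<subseteq> {w. \<forall>x\<in>K. x \<bullet> w < 0}"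
      using \<open>\<delta> > 0\<close> B(1) by (intro exI[of _ "\<delta> / B"]) (auto simp: dist_commute)
  qed
qed simp

locale linear_isometric_action = group_action G "UNIV :: (real^'n) set" act
  for G :: "('g, 'b) monoid_scheme" (structure) and act :: "'g \<Rightarrow> real^'n \<Rightarrow> real^'n" +
  assumes linear_act: "g \<in> carrier G \<Longrightarrow> linear (act g)"
    and norm_act: "g \<in> carrier G \<Longrightarrow> norm (act g x) = norm x"
begin

sublocale group G
  using group_hom group_hom.axioms(1) by blast

lemma act_one [simp]: "act \<one> x = x"
  using fun_cong[OF id_eq_one, of x] by simp

lemma act_inv_act [simp]: "g \<in> carrier G \<Longrightarrow> act (inv g) (act g x) = x"
  using orbit_sym_aux by blast

lemma bounded_linear_act: "g \<in> carrier G \<Longrightarrow> bounded_linear (act g)"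
  using linear_act linear_conv_bounded_linear by blast

lemma act_act_inv [simp]: "g \<in> carrier G \<Longrightarrow> act g (act (inv g) x) = x"
  using act_inv_act[of "inv g"] by simp

lemma orthogonal_transformation_act: "g \<in> carrier G \<Longrightarrow> orthogonal_transformation (act g)"
  unfolding orthogonal_transformation using linear_act norm_act by blast

lemma inner_act: "g \<in> carrier G \<Longrightarrow> act g x \<bullet> act g y = x \<bullet> y"
  using orthogonal_transformation_act orthogonal_transformation_def by blast

lemma norm_act_diff:
  assumes "g \<in> carrier G" shows "norm (act g x - m) = norm (x - act (inv g) m)"
proof -
  have "act g x - m = act g (x - act (inv g) m)"
    using assms linear_diff[OF linear_act[OF assms]] by simp
  then show ?thesis using norm_act[OF assms] by simp
qed

lemma Cone_iff_inner: "x \<in> Cone G act m \<longleftrightarrow> (\<forall>g\<in>carrier G. x \<bullet> act g m \<le> x \<bullet> m)"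
proof -
  have "norm (x - m) \<le> norm (x - act g m) \<longleftrightarrow> x \<bullet> act g m \<le> x \<bullet> m" if "g \<in> carrier G" for g
    using inner_act[OF that, of m m]
    by (simp add: norm_le inner_diff_left inner_diff_right inner_commute)
  then show ?thesis unfolding Cone_def by auto
qed

lemma Min_orbit_dist_eq_in_Cone:
  assumes "finite (carrier G)" and "x \<in> Cone G act m"
  shows "(MIN g\<in>carrier G. (norm (act g x - m))\<^sup>2) = (norm (x - m))\<^sup>2"
proof (rule antisym)
  have "(norm (x - m))\<^sup>2 \<in> (\<lambda>g. (norm (act g x - m))\<^sup>2) ` carrier G"
    by (rule image_eqI[of _ _ \<one>]) simp_all
  then show "(MIN g\<in>carrier G. (norm (act g x - m))\<^sup>2) \<le> (norm (x - m))\<^sup>2"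
    using assms(1) by (intro Min_le) simp_all
  have "norm (x - m) \<le> norm (act g x - m)" if "g \<in> carrier G" for g
    using assms(2) that unfolding Cone_def by (simp add: norm_act_diff)
  then show "(norm (x - m))\<^sup>2 \<le> (MIN g\<in>carrier G. (norm (act g x - m))\<^sup>2)"
    using assms(1) carrier_not_empty by (simp add: Min_ge_iff power_mono)
qed

lemma interior_Cone_subset_halfspace:
  assumes "regular_point G act t" and h: "h \<in> carrier G" "h \<noteq> \<one>"
  shows "interior (Cone G act t) \<subseteq> {x. x \<bullet> (act h t - t) < 0}"
proof -
  have "act h t - t \<noteq> 0"
  proof
    assume "act h t - t = 0"
    then have "h \<in> {g \<in> carrier G. act g t = t}" using h by simp
    with assms show False unfolding regular_point_def by blast
  qed
  moreover have "Cone G act t \<subseteq> {x. (act h t - t) \<bullet> x \<le> 0}"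
    using h by (auto simp: Cone_iff_inner inner_commute[of "act h t - t"] inner_diff_right)
  ultimately have "interior (Cone G act t) \<subseteq> {x. (act h t - t) \<bullet> x < 0}"
    by (metis interior_halfspace_le interior_mono)
  then show ?thesis by (simp add: inner_commute)
qed

lemma eventually_subset_Cone:
  assumes "finite (carrier G)" and "regular_point G act t"
    and "compact K" and "K \<subseteq> interior (Cone G act t)"
  shows "eventually (\<lambda>m. K \<subseteq> Cone G act m) (nhds t)"
proof -
  have "\<forall>h\<in>carrier G. eventually (\<lambda>m. \<forall>x\<in>K. x \<bullet> act h m \<le> x \<bullet> m) (nhds t)"
  proof
    fix h assume h: "h \<in> carrier G"
    show "eventually (\<lambda>m. \<forall>x\<in>K. x \<bullet> act h m \<le> x \<bullet> m) (nhds t)"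
    proof (cases "h = \<one>")
      case False
      define S where "S = (\<lambda>m. act h m - m) -` {w. \<forall>x\<in>K. x \<bullet> w < 0}"
      have "continuous_on UNIV (\<lambda>m. act h m - m)"
        using linear_continuous_on[OF bounded_linear_act[OF h]] by (intro continuous_intros)
      then have "open S"
        unfolding S_def using open_halfspaces_lt_of_compact[OF assms(3)] by (rule open_vimage[rotated])
      moreover have "t \<in> S"
        using interior_Cone_subset_halfspace[OF assms(2) h False] assms(4) unfolding S_def by auto
      moreover have "\<forall>m\<in>S. \<forall>x\<in>K. x \<bullet> act h m \<le> x \<bullet> m"
        unfolding S_def by (auto simp: inner_diff_right less_imp_le)
      ultimately show ?thesis unfolding eventually_nhds by blast
    qed simp
  qed
  then have "eventually (\<lambda>m. \<forall>h\<in>carrier G. \<forall>x\<in>K. x \<bullet> act h m \<le> x \<bullet> m) (nhds t)"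
    by (rule eventually_ball_finite[OF assms(1)])
  then show ?thesis by eventually_elim (auto simp: Cone_iff_inner)
qed

lemma Fmean_eq_integral_norm_diff_sq:
  assumes "finite (carrier G)" and "X \<in> borel_measurable M"
    and "AE \<omega> in M. X \<omega> \<in> Cone G act m"
  shows "Fmean G act M X m = (\<integral>\<omega>. (norm (X \<omega> - m))\<^sup>2 \<partial>M)"
  unfolding Fmean_def
proof (rule integral_cong_AE)
  have "act g \<in> borel_measurable borel" if "g \<in> carrier G" for g
    by (rule borel_measurable_continuous_onI[OF linear_continuous_on[OF bounded_linear_act[OF that]]])
  then show "(\<lambda>\<omega>. MIN g\<in>carrier G. (norm (act g (X \<omega>) - m))\<^sup>2) \<in> borel_measurable M"
    using assms(1,2) by measurable
  show "(\<lambda>\<omega>. (norm (X \<omega> - m))\<^sup>2) \<in> borel_measurable M" using assms(2) by measurable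
  show "AE \<omega> in M. (MIN g\<in>carrier G. (norm (act g (X \<omega>) - m))\<^sup>2) = (norm (X \<omega> - m))\<^sup>2"
    using assms(3) by eventually_elim (rule Min_orbit_dist_eq_in_Cone[OF assms(1)])
qed

lemma eventually_Fmean_eq_integral_norm_diff_sq:
  assumes "finite_measure M" and "finite (carrier G)" and "regular_point G act t"
    and "X \<in> borel_measurable M" and "compact (support_of M X)"
    and "support_of M X \<subseteq> interior (Cone G act t)"
  shows "eventually (\<lambda>m. Fmean G act M X m = (\<integral>\<omega>. (norm (X \<omega> - m))\<^sup>2 \<partial>M)) (nhds t)"
  using eventually_subset_Cone[OF assms(2,3,5,6)]
proof eventually_elim
  case (elim m)
  then have "AE \<omega> in M. X \<omega> \<in> Cone G act m"
    using finite_measure.AE_in_support_of[OF assms(1,4)] by (auto elim: AE_mp)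
  then show ?case using Fmean_eq_integral_norm_diff_sq assms(2,4) by blast
qed

end

lemma linear_isometric_action_if_lin_iso_eff_action:
  "lin_iso_eff_action G act \<Longrightarrow> linear_isometric_action G act"
  unfolding lin_iso_eff_action_def linear_isometric_action_def linear_isometric_action_axioms_def
  by blast

theorem mainTheorem5:
  fixes G :: "('g, 'b) monoid_scheme"
    and act :: "'g \<Rightarrow> real^'n \<Rightarrow> real^'n"
    and M :: "'a measure"
    and X :: "'a \<Rightarrow> real^'n"
  assumes "group G"
    and "finite (carrier G)"
    and "lin_iso_eff_action G act"
    and "prob_space M"
    and "X \<in> borel_measurable M"
    and "integrable M (\<lambda>\<omega>. (norm (X \<omega>))\<^sup>2)"
    and "t0 = (\<integral>\<omega>. X \<omega> \<partial>M)"
    and "regular_point G act t0"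
    and "compact (support_of M X)"
    and "support_of M X \<subseteq> interior (Cone G act t0)"
  shows "\<exists>e>0. \<forall>m. dist m t0 < e \<longrightarrow> Fmean G act M X t0 \<le> Fmean G act M X m"
proof -
  interpret prob_space M by fact
  interpret linear_isometric_action G act
    using assms(3) by (rule linear_isometric_action_if_lin_iso_eff_action)
  have F_eq: "eventually (\<lambda>m. Fmean G act M X m = (\<integral>\<omega>. (norm (X \<omega> - m))\<^sup>2 \<partial>M)) (nhds t0)"
    using eventually_Fmean_eq_integral_norm_diff_sq finite_measure_axioms assms(2,5,8,9,10) by blast
  have F_t0: "Fmean G act M X t0 = (\<integral>\<omega>. (norm (X \<omega> - t0))\<^sup>2 \<partial>M)"
    using eventually_nhds_x_imp_x[OF F_eq] .
  from F_eq have "eventually (\<lambda>m. Fmean G act M X t0 \<le> Fmean G act M X m) (nhds t0)"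
  proof eventually_elim
    case (elim m)
    with F_t0 show ?case
      using integral_norm_diff_sq_eq[OF assms(5,6), of m] unfolding assms(7)[symmetric] by simp
  qed
  then show ?thesis unfolding eventually_nhds_metric .
qed

end
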